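(* Let $\rho\in\{1/2,1\}$, let $s>0$ and $\eta>0$ be real numbers, let $q\in\mathbb{C}$, and let $\epsilon$ be real with $1<\epsilon\le 1+\rho$. Define the real cubic polynomial $$f(\gamma) = -\gamma^3\eta s^2 - \gamma^2\big[(1-\epsilon+\rho)s^2 + 2\eta s\big] + \gamma\big[2(\epsilon-1)s - s\rho + \rho|q|^2 - \eta\big] + (\epsilon-1).$$ Then $f$ has a positive root of multiplicity one or three (and no other positive root).
   Context: The polynomial $f$ satisfies $f(\gamma)=\gamma(1+\gamma s)^2\ell'(\gamma)$, where $\ell(\gamma) = -\rho\log(1+\gamma s) + \rho|q|^2/(\gamma^{-1}+s) + (\epsilon-1)\log\gamma - \eta\gamma$ for $\gamma>0$. Here $\rho=1/2$ corresponds to a real and $\rho=1$ to a complex signal model, $\epsilon$ is a gamma shape parameter and $\eta>0$ a gamma rate parameter. *)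

theory Defs
  imports Complex_Main "HOL-Computational_Algebra.Polynomial"
begin

definition cubic_f :: "real \<Rightarrow> real \<Rightarrow> real \<Rightarrow> complex \<Rightarrow> real \<Rightarrow> real poly" where
  "cubic_f \<rho> s \<eta> q \<epsilon> =
     [: \<epsilon> - 1,
        2 * (\<epsilon> - 1) * s - s * \<rho> + \<rho> * (cmod q)\<^sup>2 - \<eta>,
        - ((1 - \<epsilon> + \<rho>) * s\<^sup>2 + 2 * \<eta> * s),
        - (\<eta> * s\<^sup>2) :]"

end

theory Submission
  imports Defs
begin

(* All coefficients of f except the linear one have fixed signs: f(0) = eps - 1 > 0, the
   quadratic coefficient is <= 0 and the leading one is < 0. For such a cubic
   p = a0 + a1 x + a2 x^2 + a3 x^3 the function p(x)/x = a0/x + a1 + a2 x + a3 x^2 is strictly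
   decreasing on (0, oo), so p has at most one positive root; it has one since p(0) > 0 and
   p(x) -> -oo. At that root the derivative of p(x)/x, which is p'(x)/x there, is negative,
   so the root is simple. *)

lemma positive_root_if_lead_coeff_neg:
  fixes p :: "real poly"
  assumes "poly p 0 > 0" and "lead_coeff p < 0"
  shows "\<exists>x>0. poly p x = 0"
proof -
  obtain n where n: "\<And>x. x \<ge> n \<Longrightarrow> poly (- p) x \<ge> lead_coeff (- p)"
    using poly_pinfty_gt_lc[of "- p"] assms(2) by auto
  define b where "b = max 1 n"
  have "b > 0" by (simp add: b_def)
  moreover have "poly p b < 0"
    using n[of b] assms(2) by (simp add: b_def)
  ultimately show ?thesis
    using poly_IVT_neg[of 0 b p] assms(1) by auto
qed

lemma order_eq_1_if_pderiv_nonzero: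
  fixes p :: "'a::{idom,semiring_char_0} poly"
  assumes "poly p x = 0" and "poly (pderiv p) x \<noteq> 0"
  shows "order x p = 1"
proof -
  have "p \<noteq> 0" using assms(2) by auto
  then show ?thesis
    using order_pderiv[OF _ assms(1)] assms(2) by (simp add: order_root)
qed

lemma cubic_div_strict_decreasing:
  fixes a0 a1 a2 a3 x y :: real
  assumes "a0 > 0" "a2 \<le> 0" "a3 < 0" and "0 < x" "x < y"
  shows "x * poly [:a0, a1, a2, a3:] y < y * poly [:a0, a1, a2, a3:] x"
proof -
  have "y * poly [:a0, a1, a2, a3:] x - x * poly [:a0, a1, a2, a3:] y
      = (y - x) * (a0 - a2 * (x * y) - a3 * (x * y) * (x + y))"
    by (simp add: algebra_simps)
  moreover have "a2 * (x * y) \<le> 0" and "a3 * (x * y) * (x + y) < 0"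
    using assms by (simp_all add: mult_nonpos_nonneg mult_neg_pos)
  ultimately show ?thesis
    using assms by (smt (verit) mult_pos_pos)
qed

lemma cubic_positive_root_unique:
  fixes a0 a1 a2 a3 x y :: real
  assumes "a0 > 0" "a2 \<le> 0" "a3 < 0"
    and "x > 0" "poly [:a0, a1, a2, a3:] x = 0"
    and "y > 0" "poly [:a0, a1, a2, a3:] y = 0"
  shows "x = y"
proof (cases x y rule: linorder_cases)
  case less
  with cubic_div_strict_decreasing[OF assms(1-3) assms(4)] assms(5,7) show ?thesis
    by (metis less_irrefl mult_zero_right)
next
  case greater
  with cubic_div_strict_decreasing[OF assms(1-3) assms(6)] assms(5,7) show ?thesis
    by (metis less_irrefl mult_zero_right)
qed

lemma cubic_pderiv_neg_at_positive_root:
  fixes a0 a1 a2 a3 x :: real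
  assumes "a0 > 0" "a2 \<le> 0" "a3 < 0"
    and "x > 0" "poly [:a0, a1, a2, a3:] x = 0"
  shows "poly (pderiv [:a0, a1, a2, a3:]) x < 0"
proof -
  have "x * poly (pderiv [:a0, a1, a2, a3:]) x
      = x * poly (pderiv [:a0, a1, a2, a3:]) x - poly [:a0, a1, a2, a3:] x"
    using assms(5) by simp
  also have "\<dots> = a2 * (x * x) + 2 * a3 * (x * x * x) - a0"
    by (simp add: pderiv_pCons algebra_simps)
  also have "\<dots> < 0"
    using assms by (smt (verit) mult_nonpos_nonneg mult_neg_pos mult_pos_pos)
  finally show ?thesis
    using assms(4) by (simp add: mult_less_0_iff)
qed

lemma cubic_unique_simple_positive_root:
  fixes a0 a1 a2 a3 :: real
  assumes "a0 > 0" "a2 \<le> 0" "a3 < 0"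
  shows "\<exists>x>0. poly [:a0, a1, a2, a3:] x = 0 \<and> order x [:a0, a1, a2, a3:] = 1
           \<and> (\<forall>y>0. poly [:a0, a1, a2, a3:] y = 0 \<longrightarrow> y = x)"
proof -
  obtain x where x: "x > 0" "poly [:a0, a1, a2, a3:] x = 0"
    using positive_root_if_lead_coeff_neg[of "[:a0, a1, a2, a3:]"] assms by auto
  have "order x [:a0, a1, a2, a3:] = 1"
    using order_eq_1_if_pderiv_nonzero x cubic_pderiv_neg_at_positive_root[OF assms x]
    by (metis less_irrefl)
  with x show ?thesis
    using cubic_positive_root_unique[OF assms] by blast
qed

theorem lemma2:
  fixes \<rho> s \<eta> \<epsilon> :: real and q :: complex
  assumes "\<rho> = 1/2 \<or> \<rho> = 1"
    and "s > 0" and "\<eta> > 0"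
    and "1 < \<epsilon>" and "\<epsilon> \<le> 1 + \<rho>"
  shows "\<exists>\<gamma>>0. poly (cubic_f \<rho> s \<eta> q \<epsilon>) \<gamma> = 0
           \<and> order \<gamma> (cubic_f \<rho> s \<eta> q \<epsilon>) \<in> {1, 3}
           \<and> (\<forall>\<delta>>0. poly (cubic_f \<rho> s \<eta> q \<epsilon>) \<delta> = 0 \<longrightarrow> \<delta> = \<gamma>)"
proof -
  have "\<epsilon> - 1 > 0" using assms(4) by simp
  moreover have "- ((1 - \<epsilon> + \<rho>) * s\<^sup>2 + 2 * \<eta> * s) \<le> 0"
  proof -
    have "(1 - \<epsilon> + \<rho>) * s\<^sup>2 \<ge> 0" using assms(5) by simp
    moreover have "\<eta> * s > 0" using assms(2,3) by simp
    ultimately show ?thesis by simp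
  qed
  moreover have "- (\<eta> * s\<^sup>2) < 0"
    using assms(2,3) by simp
  ultimately show ?thesis
    unfolding cubic_f_def
    by (metis insertI1 cubic_unique_simple_positive_root)
qed

end
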